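(* Let $a,b>0$ with $a\neq2b$ and $a\neq b$, $\eta\in(0,1]$, $T>0$ and $0<\tau\le T$. For two photons both in the double-exponential state $(a,b)$ in the double-click protocol with detection time window $T$ and coincidence time window $\tau$, the Hong-Ou-Mandel visibility $V(T,\tau)$ satisfies $$V(T,\tau)\left(\frac{p_{\mathrm{det}}(T)}{\eta}\right)^2p_{\mathrm{ph\text{-}ph}}(T,\tau)=\frac{a}{a+2b}(1-e^{-2b\tau})+\frac{2ab^2}{(a-2b)^2(a-b)}\big(1-e^{2(a-b)\tau}\big)e^{-2aT}+\frac{a^2}{(a-2b)^2}(1-e^{2b\tau})e^{-4bT}-\frac{16ab^2}{(a-2b)^2(a+2b)}(1-e^{a\tau})e^{-(a+2b)T}.$$
   Context: $\Theta$ is the Heaviside step function. The double-exponential photon state $(a,b)$ is the mixture over emission times $t_0$ with density $p_{\mathrm{em}}(t_0)=ae^{-at_0}\Theta(t_0)$ of pure photons with real temporal wave function $\psi_{t_0}(t)=\sqrt{2b}\,e^{-b(t-t_0)}\Theta(t-t_0)$. For detectors of efficiency $\eta$: $p(t)=\eta\int_0^\infty p_{\mathrm{em}}(t_0)|\psi_{t_0}(t)|^2dt_0$ is the detection-time density, $p_{\mathrm{det}}(T)=\int_0^Tp(t)\,dt$, $p_T(t)=\Theta(t)\Theta(T-t)p(t)/p_{\mathrm{det}}(T)$, and $p_{\mathrm{ph\text{-}ph}}(T,\tau)=\iint_{|t_1-t_2|\le\tau}p_T(t_1)p_T(t_2)\,dt_1dt_2$. A success requires both detections in $[0,T]$ and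 at most $\tau$ apart. The visibility is $V(T,\tau)=1-P_{\mathrm{same}}/P_{\mathrm{diff}}$, where $P_{\mathrm{diff}}=\frac12p_{\mathrm{det}}(T)^2p_{\mathrm{ph\text{-}ph}}(T,\tau)$ is the probability that two photons in different (non-interfering) modes are both detected, at different detectors, under these window conditions, and $$P_{\mathrm{same}}=\frac{\eta^2}{4}\int_0^\infty\!\!\int_0^\infty\!\!\iint_{[0,T]^2,\,|t_1'-t_2'|\le\tau}p_{\mathrm{em}}(t_1)p_{\mathrm{em}}(t_2)\big|\psi_{t_1}(t_1')\psi_{t_2}(t_2')-\psi_{t_1}(t_2')\psi_{t_2}(t_1')\big|^2dt_1'dt_2'\,dt_1dt_2$$ is the corresponding probability for two photons in the same mode interfering on a 50:50 beam splitter. *)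

theory Defs
  imports "HOL-Analysis.Analysis"
begin

text \<open>Double-exponential photon state (a,b); Heaviside step encoded by if-then-else
  (Theta(0) = 1 convention; irrelevant for integrals).\<close>

definition p_em :: "real \<Rightarrow> real \<Rightarrow> real" where
  "p_em a t0 = (if t0 \<ge> 0 then a * exp (- a * t0) else 0)"

definition psi :: "real \<Rightarrow> real \<Rightarrow> real \<Rightarrow> real" where
  "psi b t0 t = (if t \<ge> t0 then sqrt (2 * b) * exp (- b * (t - t0)) else 0)"

definition p_dens :: "real \<Rightarrow> real \<Rightarrow> real \<Rightarrow> real \<Rightarrow> real" where
  "p_dens \<eta> a b t = \<eta> * (\<integral>t0\<in>{0..}. p_em a t0 * (psi b t0 t)\<^sup>2 \<partial>lborel)"

definition p_det :: "real \<Rightarrow> real \<Rightarrow> real \<Rightarrow> real \<Rightarrow> real" where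
  "p_det \<eta> a b T = (\<integral>t\<in>{0..T}. p_dens \<eta> a b t \<partial>lborel)"

definition p_T :: "real \<Rightarrow> real \<Rightarrow> real \<Rightarrow> real \<Rightarrow> real \<Rightarrow> real" where
  "p_T \<eta> a b T t = (if 0 \<le> t \<and> t \<le> T then p_dens \<eta> a b t / p_det \<eta> a b T else 0)"

definition p_phph :: "real \<Rightarrow> real \<Rightarrow> real \<Rightarrow> real \<Rightarrow> real \<Rightarrow> real" where
  "p_phph \<eta> a b T \<tau> =
     (\<integral>x\<in>{x::real\<times>real. \<bar>fst x - snd x\<bar> \<le> \<tau>}.
        p_T \<eta> a b T (fst x) * p_T \<eta> a b T (snd x) \<partial>lborel)"

definition P_diff :: "real \<Rightarrow> real \<Rightarrow> real \<Rightarrow> real \<Rightarrow> real \<Rightarrow> real" where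
  "P_diff \<eta> a b T \<tau> = 1/2 * (p_det \<eta> a b T)\<^sup>2 * p_phph \<eta> a b T \<tau>"

definition P_same :: "real \<Rightarrow> real \<Rightarrow> real \<Rightarrow> real \<Rightarrow> real \<Rightarrow> real" where
  "P_same \<eta> a b T \<tau> = \<eta>\<^sup>2 / 4 *
     (\<integral>e\<in>{0..}\<times>{0..}.
        (\<integral>s\<in>{s::real\<times>real. 0 \<le> fst s \<and> fst s \<le> T \<and> 0 \<le> snd s \<and> snd s \<le> T
                              \<and> \<bar>fst s - snd s\<bar> \<le> \<tau>}.
           p_em a (fst e) * p_em a (snd e) *
           (psi b (fst e) (fst s) * psi b (snd e) (snd s)
            - psi b (fst e) (snd s) * psi b (snd e) (fst s))\<^sup>2 \<partial>lborel) \<partial>lborel)"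

definition visibility :: "real \<Rightarrow> real \<Rightarrow> real \<Rightarrow> real \<Rightarrow> real \<Rightarrow> real" where
  "visibility \<eta> a b T \<tau> = 1 - P_same \<eta> a b T \<tau> / P_diff \<eta> a b T \<tau>"

end

theory Submission
  imports Defs
begin

text \<open>
  The mixed photon state has the explicit temporal density matrix
  \<open>\<rho>(x, y) = \<integral> p_em(t0) \<psi>_t0(x) \<psi>_t0(y) dt0\<close>, and the detection density is \<open>p(t) = \<eta> \<rho>(t, t)\<close>.
  Expanding the square in \<open>P_same\<close> and integrating out the two emission times by Fubini gives
  \<open>P_same = \<eta>\<^sup>2 (Q - \<Gamma>) / 2\<close>, where \<open>Q\<close> and \<open>\<Gamma>\<close> are the integrals of \<open>\<rho>(x, x) \<rho>(y, y)\<close> and of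
  \<open>\<rho>(x, y)\<^sup>2\<close> over the coincidence window, while \<open>p_det\<^sup>2 p_phph = \<eta>\<^sup>2 Q = 2 P_diff\<close>. So the left-hand
  side of the theorem is \<open>\<Gamma>\<close>. As \<open>\<rho>\<^sup>2\<close> is symmetric, \<open>\<Gamma>\<close> is twice the integral over the lag
  \<open>d = y - x \<ge> 0\<close>; for fixed \<open>d \<le> \<tau>\<close> the integral over \<open>x \<in> [0, T - d]\<close> is a combination of
  exponentials in \<open>d\<close>, and integrating these over \<open>[0, \<tau>]\<close> yields the four terms.
\<close>

lemma abs_diff_sq_le:
  fixes X Y c :: real
  assumes "\<bar>X\<bar> \<le> c" "\<bar>Y\<bar> \<le> c"
  shows "(X - Y)\<^sup>2 \<le> 4 * c\<^sup>2"
proof -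
  have "\<bar>X - Y\<bar> \<le> 2 * c"
    using assms abs_triangle_ineq4[of X Y] by linarith
  then have "\<bar>X - Y\<bar>\<^sup>2 \<le> (2 * c)\<^sup>2"
    by (intro power_mono) auto
  then show ?thesis
    by (simp add: power_mult_distrib)
qed

lemma has_integral_exp_mult:
  fixes k u :: real
  assumes "k \<noteq> 0" "0 \<le> u"
  shows "((\<lambda>z. exp (k * z)) has_integral (exp (k * u) - 1) / k) {0..u}"
proof -
  have "((\<lambda>z. exp (k * z)) has_integral exp (k * u) / k - exp (k * 0) / k) {0..u}"
    using assms
    by (intro fundamental_theorem_of_calculus)
       (auto intro!: derivative_eq_intros simp flip: has_real_derivative_iff_has_vector_derivative)
  then show ?thesis
    by (simp add: diff_divide_distrib)
qed

lemma set_integral_Icc_eq_integral: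
  fixes f :: "real \<Rightarrow> real"
  assumes "continuous_on {l..u} f"
  shows "(\<integral>t\<in>{l..u}. f t \<partial>lborel) = integral {l..u} f"
  using borel_integrable_compact[OF compact_Icc assms]
  by (intro set_borel_integral_eq_integral(2)) (simp add: set_integrable_def)

lemma integral_pos_if_pos_on_set:
  fixes f :: "'a \<Rightarrow> real"
  assumes f: "integrable M f" and nonneg: "AE x in M. 0 \<le> f x"
    and A: "A \<in> sets M" "emeasure M A > 0" and pos: "\<And>x. x \<in> A \<Longrightarrow> 0 < f x"
  shows "integral\<^sup>L M f > 0"
proof -
  have "integral\<^sup>L M f \<noteq> 0"
  proof
    assume "integral\<^sup>L M f = 0"
    then have "AE x in M. f x = 0"
      using integral_nonneg_eq_0_iff_AE[OF f nonneg] by simp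
    then have "AE x in M. x \<notin> A"
      by eventually_elim (use pos in force)
    moreover have "{x \<in> space M. \<not> x \<notin> A} = A"
      using sets.sets_into_space[OF A(1)] by auto
    ultimately have "emeasure M A = 0"
      using AE_iff_measurable[OF A(1)] by simp
    with A(2) show False
      by simp
  qed
  moreover have "integral\<^sup>L M f \<ge> 0"
    using nonneg by (rule integral_nonneg_AE)
  ultimately show ?thesis
    by linarith
qed

lemma (in pair_sigma_finite) integrable_product_mult:
  fixes f :: "'a \<Rightarrow> real" and g :: "'b \<Rightarrow> real"
  assumes f: "integrable M1 f" and g: "integrable M2 g"
  shows "integrable (M1 \<Otimes>\<^sub>M M2) (\<lambda>(x, y). f x * g y)"
proof -
  have [measurable]: "f \<in> borel_measurable M1" "g \<in> borel_measurable M2"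
    using f g by auto
  have "(\<integral>\<^sup>+z. ennreal (norm ((\<lambda>(x, y). f x * g y) z)) \<partial>(M1 \<Otimes>\<^sub>M M2))
      = (\<integral>\<^sup>+x. \<integral>\<^sup>+y. ennreal (norm (f x)) * ennreal (norm (g y)) \<partial>M2 \<partial>M1)"
    by (subst M2.nn_integral_fst[symmetric]) (auto simp: ennreal_mult abs_mult)
  also have "\<dots> = (\<integral>\<^sup>+x. ennreal (norm (f x)) * (\<integral>\<^sup>+y. ennreal (norm (g y)) \<partial>M2) \<partial>M1)"
    by (intro nn_integral_cong nn_integral_cmult) auto
  also have "\<dots> = (\<integral>\<^sup>+x. ennreal (norm (f x)) \<partial>M1) * (\<integral>\<^sup>+y. ennreal (norm (g y)) \<partial>M2)"
    by (rule nn_integral_multc) auto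
  also have "\<dots> < \<infinity>"
    using f g by (simp add: integrable_iff_bounded ennreal_mult_less_top)
  finally show ?thesis
    by (subst integrable_iff_bounded) auto
qed

lemma (in pair_sigma_finite) integral_product_mult:
  fixes f :: "'a \<Rightarrow> real" and g :: "'b \<Rightarrow> real"
  assumes f: "integrable M1 f" and g: "integrable M2 g"
  shows "(\<integral>z. (\<lambda>(x, y). f x * g y) z \<partial>(M1 \<Otimes>\<^sub>M M2)) = integral\<^sup>L M1 f * integral\<^sup>L M2 g"
  using integral_fst'[OF integrable_product_mult[OF f g]] by simp

lemma lborel_integral_even:
  fixes g :: "real \<Rightarrow> real"
  assumes g: "integrable lborel g" and even: "\<And>x. g (- x) = g x"
  shows "integral\<^sup>L lborel g = 2 * (\<integral>x. indicator {0..} x * g x \<partial>lborel)"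
proof -
  have [measurable]: "g \<in> borel_measurable borel"
    using g by auto
  have "(\<integral>x. indicator {..0} x * g x \<partial>lborel)
      = \<bar>-1\<bar> *\<^sub>R (\<integral>x. indicator {..0} (0 + -1 * x) * g (0 + -1 * x) \<partial>lborel)"
    by (rule lborel_integral_real_affine) simp
  also have "\<dots> = (\<integral>x. indicator {0..} x * g x \<partial>lborel)"
    by (simp add: even indicator_def)
  finally have neg: "(\<integral>x. indicator {..0} x * g x \<partial>lborel) = (\<integral>x. indicator {0..} x * g x \<partial>lborel)" .
  have pos: "(\<integral>x. indicator {0<..} x * g x \<partial>lborel) = (\<integral>x. indicator {0..} x * g x \<partial>lborel)"
    using AE_lborel_singleton[of 0]
    by (intro integral_cong_AE) (auto elim!: eventually_mono simp: indicator_def)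
  have "integral\<^sup>L lborel g = (\<integral>x. indicator {0<..} x * g x + indicator {..0} x * g x \<partial>lborel)"
    by (intro Bochner_Integration.integral_cong) (auto simp: indicator_def)
  also have "\<dots> = (\<integral>x. indicator {0<..} x * g x \<partial>lborel) + (\<integral>x. indicator {..0} x * g x \<partial>lborel)"
    using integrable_mult_indicator[of "{0<..}" lborel g] integrable_mult_indicator[of "{..0}" lborel g] g
    by (intro Bochner_Integration.integral_add) simp_all
  finally have "integral\<^sup>L lborel g
      = (\<integral>x. indicator {0<..} x * g x \<partial>lborel) + (\<integral>x. indicator {..0} x * g x \<partial>lborel)" .
  with neg pos show ?thesis
    by linarith
qed

lemma measurable_shear [measurable]: "(\<lambda>s :: real \<times> real. (fst s, fst s + snd s)) \<in> borel \<rightarrow>\<^sub>M borel"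
  by (intro borel_measurable_continuous_onI continuous_intros)

lemma nn_integral_lborel_shear:
  fixes f :: "real \<times> real \<Rightarrow> ennreal"
  assumes [measurable]: "f \<in> borel_measurable borel"
  shows "(\<integral>\<^sup>+s. f (fst s, fst s + snd s) \<partial>lborel) = integral\<^sup>N lborel f"
proof -
  have shift: "(\<integral>\<^sup>+d. f (z, z + d) \<partial>lborel) = (\<integral>\<^sup>+y. f (z, y) \<partial>lborel)" for z
  proof -
    have "(\<lambda>y. f (z, y)) \<in> borel_measurable borel"
      by measurable
    from nn_integral_real_affine[OF this, where c = 1 and t = z] show ?thesis
      by simp
  qed
  have "(\<integral>\<^sup>+s. f (fst s, fst s + snd s) \<partial>lborel) = (\<integral>\<^sup>+z. \<integral>\<^sup>+d. f (z, z + d) \<partial>lborel \<partial>lborel)"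
    unfolding lborel_prod[symmetric] by (subst lborel.nn_integral_fst[symmetric]) auto
  also have "\<dots> = (\<integral>\<^sup>+z. \<integral>\<^sup>+y. f (z, y) \<partial>lborel \<partial>lborel)"
    by (simp only: shift)
  also have "\<dots> = integral\<^sup>N lborel f"
    unfolding lborel_prod[symmetric] by (subst lborel.nn_integral_fst) (auto simp: lborel_prod)
  finally show ?thesis .
qed

lemma integrable_lborel_shear:
  fixes f :: "real \<times> real \<Rightarrow> real"
  assumes f: "integrable lborel f"
  shows "integrable lborel (\<lambda>s. f (fst s, fst s + snd s))"
proof -
  have [measurable]: "f \<in> borel_measurable borel"
    using f by auto
  have "(\<integral>\<^sup>+s. ennreal (norm (f (fst s, fst s + snd s))) \<partial>lborel) = (\<integral>\<^sup>+s. ennreal (norm (f s)) \<partial>lborel)"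
    by (rule nn_integral_lborel_shear) measurable
  with f show ?thesis
    by (simp add: integrable_iff_bounded)
qed

lemma integral_lborel_shear:
  fixes f :: "real \<times> real \<Rightarrow> real"
  assumes f: "integrable lborel f"
  shows "integral\<^sup>L lborel f = (\<integral>d. (\<integral>z. f (z, z + d) \<partial>lborel) \<partial>lborel)"
proof -
  have [measurable]: "f \<in> borel_measurable borel"
    using f by auto
  have shear_int: "integrable (lborel \<Otimes>\<^sub>M lborel) (\<lambda>(z, d). f (z, z + d))"
    using integrable_lborel_shear[OF f] by (simp add: lborel_prod case_prod_beta')
  have "integral\<^sup>L lborel f = (\<integral>z. (\<integral>y. f (z, y) \<partial>lborel) \<partial>lborel)"
    using lborel_pair.integral_fst'[of f] f by (simp add: lborel_prod)
  also have "\<dots> = (\<integral>z. (\<integral>d. f (z, z + d) \<partial>lborel) \<partial>lborel)"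
    using lborel_integral_real_affine[where c = 1 and f = "\<lambda>y. f (_, y)"] by simp
  also have "\<dots> = integral\<^sup>L (lborel \<Otimes>\<^sub>M lborel) (\<lambda>(z, d). f (z, z + d))"
    using lborel_pair.integral_fst[OF shear_int] by simp
  also have "\<dots> = (\<integral>d. (\<integral>z. f (z, z + d) \<partial>lborel) \<partial>lborel)"
    using lborel_pair.integral_snd[OF shear_int] by simp
  finally show ?thesis .
qed

lemma integral_lborel_symmetric:
  fixes f :: "real \<times> real \<Rightarrow> real"
  assumes f: "integrable lborel f" and sym: "\<And>x y. f (x, y) = f (y, x)"
  shows "integral\<^sup>L lborel f = 2 * (\<integral>d. indicator {0..} d * (\<integral>z. f (z, z + d) \<partial>lborel) \<partial>lborel)"
proof -
  define g where "g d = (\<integral>z. f (z, z + d) \<partial>lborel)" for d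
  have "integrable (lborel \<Otimes>\<^sub>M lborel) (\<lambda>(z, d). f (z, z + d))"
    using integrable_lborel_shear[OF f] by (simp add: lborel_prod case_prod_beta')
  then have g_int: "integrable lborel g"
    unfolding g_def by (rule lborel_pair.integrable_snd)
  have g_even: "g (- d) = g d" for d
  proof -
    have "g (- d) = \<bar>1\<bar> *\<^sub>R (\<integral>z. f (d + 1 * z, d + 1 * z + - d) \<partial>lborel)"
      unfolding g_def by (rule lborel_integral_real_affine) simp
    also have "\<dots> = g d"
      unfolding g_def by (simp add: sym add.commute)
    finally show ?thesis .
  qed
  show ?thesis
    unfolding integral_lborel_shear[OF f] g_def[symmetric] using g_int g_even
    by (rule lborel_integral_even)
qed

section \<open>The photon state and its temporal density matrix\<close>

lemma p_em_measurable [measurable]: "p_em a \<in> borel_measurable borel"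
  unfolding p_em_def by measurable

lemma psi_measurable [measurable]:
  assumes [measurable]: "f \<in> borel_measurable M" "g \<in> borel_measurable M"
  shows "(\<lambda>x. psi b (f x) (g x)) \<in> borel_measurable M"
  unfolding psi_def by measurable

lemma abs_psi_le:
  assumes "b \<ge> 0"
  shows "\<bar>psi b t0 t\<bar> \<le> sqrt (2 * b)"
proof -
  have "exp (- b * (t - t0)) \<le> 1" if "t0 \<le> t"
    using assms that by simp
  then show ?thesis
    using assms by (auto simp: psi_def abs_mult intro: mult_left_le)
qed

lemma abs_psi_mult_psi_le:
  assumes "b \<ge> 0"
  shows "\<bar>psi b t0 t * psi b t0' t'\<bar> \<le> 2 * b"
proof -
  have "\<bar>psi b t0 t * psi b t0' t'\<bar> \<le> sqrt (2 * b) * sqrt (2 * b)"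
    unfolding abs_mult using assms by (intro mult_mono abs_psi_le) auto
  with assms show ?thesis
    by simp
qed

lemma p_em_nonneg: "a \<ge> 0 \<Longrightarrow> p_em a t \<ge> 0"
  by (simp add: p_em_def)

lemma integrable_p_em:
  assumes "a > 0"
  shows "integrable lborel (p_em a)"
proof -
  have "(\<lambda>t. a * exp (- a * t)) integrable_on {0..}"
    using integrable_on_mult_right[OF integrable_on_exp_minus_to_infinity[OF assms, of 0]] by simp
  then have "(\<lambda>t. a * exp (- a * t)) absolutely_integrable_on {0..}"
    by (rule nonnegative_absolutely_integrable_1) (use assms in auto)
  then have "integrable lebesgue (\<lambda>t. indicator {0..} t * (a * exp (- a * t)))"
    by (simp add: set_integrable_def)
  then have "integrable lborel (\<lambda>t. indicator {0..} t * (a * exp (- a * t)))"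
    by (subst (asm) integrable_completion) auto
  then show ?thesis
    by (rule Bochner_Integration.integrable_cong[THEN iffD1, rotated 2])
       (auto simp: p_em_def indicator_def)
qed

lemma integrable_p_em_psi_psi:
  assumes "a > 0" "b \<ge> 0"
  shows "integrable lborel (\<lambda>t0. p_em a t0 * psi b t0 x * psi b t0 y)"
proof (rule Bochner_Integration.integrable_bound)
  show "integrable lborel (\<lambda>t0. 2 * b * p_em a t0)"
    using integrable_p_em[OF assms(1)] by simp
  show "AE t0 in lborel. norm (p_em a t0 * psi b t0 x * psi b t0 y) \<le> norm (2 * b * p_em a t0)"
  proof (rule AE_I2)
    fix t0
    have "norm (p_em a t0 * psi b t0 x * psi b t0 y) = p_em a t0 * \<bar>psi b t0 x * psi b t0 y\<bar>"
      using assms p_em_nonneg[of a t0] by (simp add: abs_mult)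
    also have "\<dots> \<le> p_em a t0 * (2 * b)"
      using assms by (intro mult_left_mono abs_psi_mult_psi_le p_em_nonneg) auto
    finally show "norm (p_em a t0 * psi b t0 x * psi b t0 y) \<le> norm (2 * b * p_em a t0)"
      using assms p_em_nonneg[of a t0] by (simp add: mult.commute)
  qed
qed simp

text \<open>The density matrix \<open>\<rho>\<close> in closed form; it agrees with the integral only for \<open>x, y \<ge> 0\<close>,
  and for \<open>a = 2 * b\<close> it is the junk value \<open>0\<close>.\<close>

definition rho :: "real \<Rightarrow> real \<Rightarrow> real \<Rightarrow> real \<Rightarrow> real" where
  "rho a b x y = 2 * a * b / (2 * b - a) * exp (- b * (x + y)) * (exp ((2 * b - a) * min x y) - 1)"

lemma integral_p_em_psi_psi:
  assumes "b \<ge> 0" "a \<noteq> 2 * b" "0 \<le> x" "0 \<le> y"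
  shows "(\<integral>t0. p_em a t0 * psi b t0 x * psi b t0 y \<partial>lborel) = rho a b x y"
proof -
  define m where "m = min x y"
  define c where "c = 2 * b - a"
  have "c \<noteq> 0" "0 \<le> m"
    using assms by (auto simp: c_def m_def)
  have integrand: "p_em a t * psi b t x * psi b t y
      = indicator {0..m} t * (2 * a * b * exp (- b * (x + y)) * exp (c * t))" for t
  proof (cases "0 \<le> t \<and> t \<le> m")
    case True
    then have "p_em a t * psi b t x * psi b t y
        = a * (sqrt (2 * b) * sqrt (2 * b)) * (exp (- a * t) * exp (- b * (x - t)) * exp (- b * (y - t)))"
      by (simp add: p_em_def psi_def m_def)
    also have "\<dots> = 2 * a * b * exp (- b * (x + y)) * exp (c * t)"
      using assms by (simp add: c_def algebra_simps flip: exp_add)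
    finally show ?thesis
      using True by simp
  next
    case False
    then show ?thesis
      by (auto simp: p_em_def psi_def m_def)
  qed
  have "(\<integral>t0. p_em a t0 * psi b t0 x * psi b t0 y \<partial>lborel)
      = (\<integral>t\<in>{0..m}. 2 * a * b * exp (- b * (x + y)) * exp (c * t) \<partial>lborel)"
    unfolding integrand set_lebesgue_integral_def by simp
  also have "\<dots> = integral {0..m} (\<lambda>t. 2 * a * b * exp (- b * (x + y)) * exp (c * t))"
    by (intro set_integral_Icc_eq_integral continuous_intros)
  also have "\<dots> = 2 * a * b * exp (- b * (x + y)) * ((exp (c * m) - 1) / c)"
    using has_integral_exp_mult[OF \<open>c \<noteq> 0\<close> \<open>0 \<le> m\<close>] by (simp add: integral_unique)
  finally show ?thesis
    by (simp add: rho_def c_def m_def)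
qed


lemma p_dens_eq_rho:
  assumes "b \<ge> 0" "a \<noteq> 2 * b" "t \<ge> 0"
  shows "p_dens \<eta> a b t = \<eta> * rho a b t t"
proof -
  have "(\<integral>t0\<in>{0..}. p_em a t0 * (psi b t0 t)\<^sup>2 \<partial>lborel)
      = (\<integral>t0. p_em a t0 * psi b t0 t * psi b t0 t \<partial>lborel)"
    unfolding set_lebesgue_integral_def
    by (intro Bochner_Integration.integral_cong) (auto simp: p_em_def power2_eq_square)
  with integral_p_em_psi_psi[OF assms(1,2,3,3)] show ?thesis
    by (simp add: p_dens_def)
qed


lemma rho_commute: "rho a b x y = rho a b y x"
  by (simp add: rho_def min.commute add.commute)

lemma continuous_on_rho [continuous_intros]:
  assumes "continuous_on S f" "continuous_on S g"
  shows "continuous_on S (\<lambda>s. rho a b (f s) (g s))"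
  unfolding rho_def by (intro continuous_intros assms)

lemma rho_diag_pos:
  assumes "a > 0" "b > 0" "a \<noteq> 2 * b" "t > 0"
  shows "rho a b t t > 0"
proof -
  have "(exp ((2 * b - a) * t) - 1) / (2 * b - a) > 0"
  proof (cases "2 * b - a > 0")
    case True
    then show ?thesis
      using assms by simp
  next
    case False
    then have "2 * b - a < 0"
      using assms by simp
    moreover from this have "exp ((2 * b - a) * t) < 1"
      using assms by (simp add: mult_neg_pos)
    ultimately show ?thesis
      by (simp add: divide_neg_neg)
  qed
  moreover have "2 * a * b * exp (- b * (t + t)) > 0"
    using assms by simp
  moreover have "rho a b t t = 2 * a * b * exp (- b * (t + t)) * ((exp ((2 * b - a) * t) - 1) / (2 * b - a))"
    by (simp add: rho_def)
  ultimately show ?thesis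
    by (metis mult_pos_pos)
qed

lemma rho_diag_nonneg:
  assumes "a > 0" "b > 0" "a \<noteq> 2 * b" "t \<ge> 0"
  shows "rho a b t t \<ge> 0"
  using rho_diag_pos[OF assms(1-3), of t] assms(4) by (cases "t = 0") (auto simp: rho_def)

lemma p_det_eq_integral_rho:
  assumes "b \<ge> 0" "a \<noteq> 2 * b"
  shows "p_det \<eta> a b T = \<eta> * (\<integral>t. indicator {0..T} t * rho a b t t \<partial>lborel)"
proof -
  have "p_det \<eta> a b T = (\<integral>t. \<eta> * (indicator {0..T} t * rho a b t t) \<partial>lborel)"
    unfolding p_det_def set_lebesgue_integral_def
    by (intro Bochner_Integration.integral_cong) (auto simp: p_dens_eq_rho assms indicator_def)
  then show ?thesis
    by simp
qed

lemma p_det_pos: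
  assumes "a > 0" "b > 0" "a \<noteq> 2 * b" "\<eta> > 0" "T > 0"
  shows "p_det \<eta> a b T > 0"
proof -
  have "(\<integral>t. indicator {0..T} t * rho a b t t \<partial>lborel) > 0"
  proof (rule integral_pos_if_pos_on_set[where A = "{0<..<T}"])
    have "continuous_on {0..T} (\<lambda>t. rho a b t t)"
      by (intro continuous_intros)
    from borel_integrable_compact[OF compact_Icc this]
    show "integrable lborel (\<lambda>t. indicator {0..T} t * rho a b t t)"
      by simp
    show "AE t in lborel. 0 \<le> indicator {0..T} t * rho a b t t"
      using rho_diag_nonneg[OF assms(1-3)] by (simp add: indicator_def)
    show "0 < indicator {0..T} t * rho a b t t" if "t \<in> {0<..<T}" for t
      using rho_diag_pos[OF assms(1-3)] that by simp
  qed (use assms in simp_all)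
  then show ?thesis
    using assms by (simp add: p_det_eq_integral_rho)
qed

section \<open>Coincidence integrals\<close>

definition coincidence_window :: "real \<Rightarrow> real \<Rightarrow> (real \<times> real) set" where
  "coincidence_window T \<tau> =
     {s. 0 \<le> fst s \<and> fst s \<le> T \<and> 0 \<le> snd s \<and> snd s \<le> T \<and> \<bar>fst s - snd s\<bar> \<le> \<tau>}"

lemma compact_coincidence_window: "compact (coincidence_window T \<tau>)"
proof -
  have "coincidence_window T \<tau> = ({0..T} \<times> {0..T}) \<inter> {s. \<bar>fst s - snd s\<bar> \<le> \<tau>}"
    by (auto simp: coincidence_window_def)
  moreover have "closed {s :: real \<times> real. \<bar>fst s - snd s\<bar> \<le> \<tau>}"
    by (intro closed_Collect_le continuous_intros)
  ultimately show ?thesis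
    by (simp add: compact_Int_closed compact_Times)
qed

lemma coincidence_window_in_borel [measurable]: "coincidence_window T \<tau> \<in> sets borel"
  by (simp add: borel_closed compact_imp_closed compact_coincidence_window)

lemma coincidence_window_in_sets_pair [measurable]:
  "coincidence_window T \<tau> \<in> sets (lborel \<Otimes>\<^sub>M lborel)"
  using coincidence_window_in_borel by (simp only: lborel_prod sets_lborel)

lemma integrable_coincidence_window:
  fixes h :: "real \<times> real \<Rightarrow> real"
  assumes "continuous_on (coincidence_window T \<tau>) h"
  shows "integrable lborel (\<lambda>s. indicator (coincidence_window T \<tau>) s * h s)"
  using borel_integrable_compact[OF compact_coincidence_window assms] by simp

definition incoherent_coincidence :: "real \<Rightarrow> real \<Rightarrow> real \<Rightarrow> real \<Rightarrow> real" where
  "incoherent_coincidence a b T \<tau> =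
     (\<integral>s. indicator (coincidence_window T \<tau>) s * (rho a b (fst s) (fst s) * rho a b (snd s) (snd s)) \<partial>lborel)"

definition coherent_coincidence :: "real \<Rightarrow> real \<Rightarrow> real \<Rightarrow> real \<Rightarrow> real" where
  "coherent_coincidence a b T \<tau> =
     (\<integral>s. indicator (coincidence_window T \<tau>) s * (rho a b (fst s) (snd s))\<^sup>2 \<partial>lborel)"

lemma incoherent_coincidence_pos:
  assumes "a > 0" "b > 0" "a \<noteq> 2 * b" "0 < \<tau>" "\<tau> \<le> T"
  shows "incoherent_coincidence a b T \<tau> > 0"
  unfolding incoherent_coincidence_def
proof (rule integral_pos_if_pos_on_set[where A = "{0<..<\<tau>} \<times> {0<..<\<tau>}"])
  show "integrable lborel
      (\<lambda>s. indicator (coincidence_window T \<tau>) s * (rho a b (fst s) (fst s) * rho a b (snd s) (snd s)))"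
    by (intro integrable_coincidence_window continuous_intros)
  have "0 \<le> indicator (coincidence_window T \<tau>) s * (rho a b (fst s) (fst s) * rho a b (snd s) (snd s))" for s
    using rho_diag_nonneg[OF assms(1-3), of "fst s"] rho_diag_nonneg[OF assms(1-3), of "snd s"]
    by (simp add: indicator_def coincidence_window_def)
  then show "AE s in lborel. 0 \<le> indicator (coincidence_window T \<tau>) s * (rho a b (fst s) (fst s) * rho a b (snd s) (snd s))"
    by simp
  show "{0<..<\<tau>} \<times> {0<..<\<tau>} \<in> sets (lborel :: (real \<times> real) measure)"
    by (simp add: lborel_prod[symmetric])
  have "emeasure (lborel :: (real \<times> real) measure) ({0<..<\<tau>} \<times> {0<..<\<tau>}) = ennreal \<tau> * ennreal \<tau>"
    unfolding lborel_prod[symmetric] using assms by (subst lborel.emeasure_pair_measure_Times) auto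
  then show "emeasure (lborel :: (real \<times> real) measure) ({0<..<\<tau>} \<times> {0<..<\<tau>}) > 0"
    using assms by (simp add: ennreal_mult[symmetric])
  show "0 < indicator (coincidence_window T \<tau>) s * (rho a b (fst s) (fst s) * rho a b (snd s) (snd s))"
    if "s \<in> {0<..<\<tau>} \<times> {0<..<\<tau>}" for s
  proof -
    have "s \<in> coincidence_window T \<tau>"
      using that assms by (auto simp: coincidence_window_def)
    then show ?thesis
      using that rho_diag_pos[OF assms(1-3), of "fst s"] rho_diag_pos[OF assms(1-3), of "snd s"] by auto
  qed
qed

lemma p_det_sq_mult_p_phph:
  assumes "b \<ge> 0" "a \<noteq> 2 * b" "p_det \<eta> a b T \<noteq> 0"
  shows "(p_det \<eta> a b T)\<^sup>2 * p_phph \<eta> a b T \<tau> = \<eta>\<^sup>2 * incoherent_coincidence a b T \<tau>"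
proof -
  define W where "W = coincidence_window T \<tau>"
  have integrand: "indicator {x. \<bar>fst x - snd x\<bar> \<le> \<tau>} s *\<^sub>R (p_T \<eta> a b T (fst s) * p_T \<eta> a b T (snd s))
      = \<eta>\<^sup>2 / (p_det \<eta> a b T)\<^sup>2
        * (indicator W s * (rho a b (fst s) (fst s) * rho a b (snd s) (snd s)))" for s
    using assms
    by (cases "s \<in> W") (auto simp: W_def coincidence_window_def p_T_def indicator_def
        p_dens_eq_rho power2_eq_square)
  have "p_phph \<eta> a b T \<tau> = \<eta>\<^sup>2 / (p_det \<eta> a b T)\<^sup>2 * incoherent_coincidence a b T \<tau>"
    unfolding p_phph_def set_lebesgue_integral_def integrand incoherent_coincidence_def W_def by simp
  with assms(3) show ?thesis
    by simp
qed

definition P_same_integrand :: "real \<Rightarrow> real \<Rightarrow> real \<times> real \<Rightarrow> real \<times> real \<Rightarrow> real" where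
  "P_same_integrand a b e s = p_em a (fst e) * p_em a (snd e) *
     (psi b (fst e) (fst s) * psi b (snd e) (snd s) - psi b (fst e) (snd s) * psi b (snd e) (fst s))\<^sup>2"

lemma P_same_integrand_eq_0:
  "e \<notin> {0..} \<times> {0..} \<Longrightarrow> P_same_integrand a b e s = 0"
  by (cases e) (auto simp: P_same_integrand_def p_em_def)

lemma P_same_eq_iterated_integral:
  "P_same \<eta> a b T \<tau> = \<eta>\<^sup>2 / 4 *
     (\<integral>e. \<integral>s. indicator (coincidence_window T \<tau>) s * P_same_integrand a b e s \<partial>lborel \<partial>lborel)"
proof -
  have absorb: "indicator ({0..} \<times> {0..}) e *
      (\<integral>s. indicator (coincidence_window T \<tau>) s * P_same_integrand a b e s \<partial>lborel)
    = (\<integral>s. indicator (coincidence_window T \<tau>) s * P_same_integrand a b e s \<partial>lborel)" for e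
    by (cases "e \<in> {0..} \<times> {0..}") (simp_all add: P_same_integrand_eq_0)
  show ?thesis
    unfolding P_same_def set_lebesgue_integral_def P_same_integrand_def[symmetric]
      coincidence_window_def[symmetric] real_scaleR_def absorb ..
qed

lemma integral_P_same_integrand:
  assumes "a > 0" "b \<ge> 0" "a \<noteq> 2 * b" "0 \<le> x" "0 \<le> y"
  shows "(\<integral>e. P_same_integrand a b e (x, y) \<partial>lborel) = 2 * (rho a b x x * rho a b y y - (rho a b x y)\<^sup>2)"
proof -
  define w where "w u v t = p_em a t * psi b t u * psi b t v" for u v t
  define P where "P u v u' v' = (\<lambda>(e1, e2). w u v e1 * w u' v' e2)" for u v u' v'
  have w_int: "integrable lborel (w u v)" for u v
    unfolding w_def using assms by (intro integrable_p_em_psi_psi)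
  have P_int: "integrable (lborel \<Otimes>\<^sub>M lborel) (P u v u' v')" for u v u' v'
    unfolding P_def by (intro lborel_pair.integrable_product_mult w_int)
  have w_integral: "integral\<^sup>L lborel (w u v) = rho a b u v" if "0 \<le> u" "0 \<le> v" for u v
    unfolding w_def using assms(2,3) that by (rule integral_p_em_psi_psi)
  have P_integral: "integral\<^sup>L (lborel \<Otimes>\<^sub>M lborel) (P u v u' v') = rho a b u v * rho a b u' v'"
    if "0 \<le> u" "0 \<le> v" "0 \<le> u'" "0 \<le> v'" for u v u' v'
    unfolding P_def lborel_pair.integral_product_mult[OF w_int w_int] using that by (simp add: w_integral)
  have integrand: "P_same_integrand a b e (x, y) = P x x y y e + P y y x x e - 2 * P x y x y e" for e
    by (cases e) (simp add: P_same_integrand_def P_def w_def power2_eq_square algebra_simps)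
  have "(\<integral>e. P x x y y e + P y y x x e - 2 * P x y x y e \<partial>(lborel \<Otimes>\<^sub>M lborel))
      = rho a b x x * rho a b y y + rho a b y y * rho a b x x - 2 * (rho a b x y * rho a b x y)"
    using P_int assms by (simp add: P_integral)
  then show ?thesis
    unfolding integrand lborel_prod[symmetric] by (simp add: power2_eq_square)
qed

lemma integrable_P_same_integrand:
  assumes "a > 0" "b \<ge> 0"
  shows "integrable (lborel \<Otimes>\<^sub>M lborel)
    (\<lambda>(e, s). indicator (coincidence_window T \<tau>) s * P_same_integrand a b e s)"
proof (rule Bochner_Integration.integrable_bound)
  have "integrable lborel (\<lambda>(t1, t2). p_em a t1 * p_em a t2)"
    unfolding lborel_prod[symmetric]
    by (intro lborel_pair.integrable_product_mult integrable_p_em assms)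
  moreover have "integrable lborel (\<lambda>s. indicator (coincidence_window T \<tau>) s * (16 * b\<^sup>2))"
    by (intro integrable_coincidence_window continuous_intros)
  ultimately show "integrable (lborel \<Otimes>\<^sub>M lborel) (\<lambda>(e, s).
      (\<lambda>(t1, t2). p_em a t1 * p_em a t2) e * (indicator (coincidence_window T \<tau>) s * (16 * b\<^sup>2)))"
    by (rule lborel_pair.integrable_product_mult)
  show "(\<lambda>(e, s). indicator (coincidence_window T \<tau>) s * P_same_integrand a b e s)
      \<in> borel_measurable (lborel \<Otimes>\<^sub>M lborel)"
    unfolding P_same_integrand_def lborel_prod[symmetric] by measurable
  have bound: "\<bar>P_same_integrand a b e s\<bar> \<le> p_em a (fst e) * p_em a (snd e) * (16 * b\<^sup>2)" for e s
  proof -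
    have "(psi b (fst e) (fst s) * psi b (snd e) (snd s) - psi b (fst e) (snd s) * psi b (snd e) (fst s))\<^sup>2
        \<le> 4 * (2 * b)\<^sup>2"
      using assms by (intro abs_diff_sq_le abs_psi_mult_psi_le)
    then show ?thesis
      using assms p_em_nonneg[of a "fst e"] p_em_nonneg[of a "snd e"]
      by (auto simp: P_same_integrand_def abs_mult power_mult_distrib intro!: mult_left_mono)
  qed
  show "AE z in lborel \<Otimes>\<^sub>M lborel.
      norm ((\<lambda>(e, s). indicator (coincidence_window T \<tau>) s * P_same_integrand a b e s) z)
      \<le> norm ((\<lambda>(e, s). (\<lambda>(t1, t2). p_em a t1 * p_em a t2) e
          * (indicator (coincidence_window T \<tau>) s * (16 * b\<^sup>2))) z)"
  proof (intro AE_I2)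
    fix z :: "(real \<times> real) \<times> real \<times> real"
    obtain t1 t2 s where z: "z = ((t1, t2), s)"
      by (metis prod.exhaust)
    show "norm ((\<lambda>(e, s). indicator (coincidence_window T \<tau>) s * P_same_integrand a b e s) z)
      \<le> norm ((\<lambda>(e, s). (\<lambda>(t1, t2). p_em a t1 * p_em a t2) e
          * (indicator (coincidence_window T \<tau>) s * (16 * b\<^sup>2))) z)"
      using bound[of "(t1, t2)" s] p_em_nonneg[of a t1] p_em_nonneg[of a t2] assms
      by (simp add: z indicator_def abs_mult)
  qed
qed

lemma P_same_eq:
  assumes "a > 0" "b \<ge> 0" "a \<noteq> 2 * b"
  shows "P_same \<eta> a b T \<tau> = \<eta>\<^sup>2 / 2 * (incoherent_coincidence a b T \<tau> - coherent_coincidence a b T \<tau>)"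
proof -
  define W where "W = coincidence_window T \<tau>"
  have inner: "(\<integral>e. indicator W s * P_same_integrand a b e s \<partial>lborel)
      = 2 * (indicator W s * (rho a b (fst s) (fst s) * rho a b (snd s) (snd s)))
        - 2 * (indicator W s * (rho a b (fst s) (snd s))\<^sup>2)" for s
  proof (cases "s \<in> W")
    case True
    then have "0 \<le> fst s" "0 \<le> snd s"
      by (auto simp: W_def coincidence_window_def)
    with True show ?thesis
      using integral_P_same_integrand[OF assms, of "fst s" "snd s"] by (simp add: algebra_simps)
  qed simp
  have rho_int: "integrable lborel (\<lambda>s. indicator W s * (rho a b (fst s) (fst s) * rho a b (snd s) (snd s)))"
    "integrable lborel (\<lambda>s. indicator W s * (rho a b (fst s) (snd s))\<^sup>2)"
    unfolding W_def by (intro integrable_coincidence_window continuous_intros)+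
  have "(\<integral>e. \<integral>s. indicator W s * P_same_integrand a b e s \<partial>lborel \<partial>lborel)
      = (\<integral>s. \<integral>e. indicator W s * P_same_integrand a b e s \<partial>lborel \<partial>lborel)"
    using lborel_pair.Fubini_integral[OF integrable_P_same_integrand[OF assms(1,2)]] by (simp add: W_def)
  also have "\<dots> = 2 * incoherent_coincidence a b T \<tau> - 2 * coherent_coincidence a b T \<tau>"
    unfolding inner incoherent_coincidence_def coherent_coincidence_def W_def[symmetric]
    using Bochner_Integration.integral_diff[OF integrable_mult_right[OF rho_int(1)]
        integrable_mult_right[OF rho_int(2)], of 2 2]
    by simp
  finally have iterated: "(\<integral>e. \<integral>s. indicator W s * P_same_integrand a b e s \<partial>lborel \<partial>lborel)
      = 2 * incoherent_coincidence a b T \<tau> - 2 * coherent_coincidence a b T \<tau>" .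
  show ?thesis
    unfolding P_same_eq_iterated_integral W_def[symmetric] iterated by (simp add: algebra_simps)
qed

section \<open>Evaluation of the coherent coincidence integral\<close>

lemma coherent_coincidence_eq_integral_lag:
  "coherent_coincidence a b T \<tau> = 2 * (\<integral>d. indicator {0..} d *
     (\<integral>z. indicator (coincidence_window T \<tau>) (z, z + d) * (rho a b z (z + d))\<^sup>2 \<partial>lborel) \<partial>lborel)"
  unfolding coherent_coincidence_def
proof (subst integral_lborel_symmetric)
  show "integrable lborel (\<lambda>s. indicator (coincidence_window T \<tau>) s * (rho a b (fst s) (snd s))\<^sup>2)"
    by (intro integrable_coincidence_window continuous_intros)
  show "indicator (coincidence_window T \<tau>) (x, y) * (rho a b (fst (x, y)) (snd (x, y)))\<^sup>2
      = indicator (coincidence_window T \<tau>) (y, x) * (rho a b (fst (y, x)) (snd (y, x)))\<^sup>2" for x y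
    by (auto simp: coincidence_window_def indicator_def rho_commute[of a b x y])
qed simp

lemma rho_sq_shifted:
  assumes "0 \<le> z" "0 \<le> d"
  shows "(rho a b z (z + d))\<^sup>2 = (2 * a * b / (2 * b - a))\<^sup>2 * exp (- (2 * b) * d) *
    (exp (- (2 * a) * z) - 2 * exp (- (a + 2 * b) * z) + exp (- (4 * b) * z))"
proof -
  have exps: "(exp (- b * (z + (z + d))))\<^sup>2 * (exp ((2 * b - a) * z) - 1)\<^sup>2
      = exp (- (2 * b) * d) * (exp (- (2 * a) * z) - 2 * exp (- (a + 2 * b) * z) + exp (- (4 * b) * z))"
    by (simp add: power2_eq_square algebra_simps flip: exp_add)
  have "min z (z + d) = z"
    using assms by simp
  then have "(rho a b z (z + d))\<^sup>2
      = (2 * a * b / (2 * b - a))\<^sup>2 * ((exp (- b * (z + (z + d))))\<^sup>2 * (exp ((2 * b - a) * z) - 1)\<^sup>2)"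
    unfolding rho_def by (simp only: power_mult_distrib mult.assoc)
  then show ?thesis
    unfolding exps by (simp only: mult.assoc)
qed

lemma integral_rho_sq_lag:
  assumes "a > 0" "b > 0" "0 \<le> d" "d \<le> \<tau>" "\<tau> \<le> T"
  shows "(\<integral>z. indicator (coincidence_window T \<tau>) (z, z + d) * (rho a b z (z + d))\<^sup>2 \<partial>lborel)
    = (2 * a * b / (2 * b - a))\<^sup>2 *
      ((1 / (2 * a) - 2 / (a + 2 * b) + 1 / (4 * b)) * exp (- (2 * b) * d)
       - exp (- 2 * a * T) / (2 * a) * exp (2 * (a - b) * d)
       + 2 * exp (- (a + 2 * b) * T) / (a + 2 * b) * exp (a * d)
       - exp (- 4 * b * T) / (4 * b) * exp (2 * b * d))"
proof -
  define C where "C = (2 * a * b / (2 * b - a))\<^sup>2"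
  define h where "h z = C * exp (- (2 * b) * d) *
    (exp (- (2 * a) * z) - 2 * exp (- (a + 2 * b) * z) + exp (- (4 * b) * z))" for z
  have integrand: "indicator (coincidence_window T \<tau>) (z, z + d) * (rho a b z (z + d))\<^sup>2
      = indicator {0..T - d} z * h z" for z
    using assms rho_sq_shifted[of z d a b]
    by (auto simp: coincidence_window_def indicator_def h_def C_def)
  have "(h has_integral C * exp (- (2 * b) * d) * ((exp (- (2 * a) * (T - d)) - 1) / - (2 * a)
      - 2 * ((exp (- (a + 2 * b) * (T - d)) - 1) / - (a + 2 * b))
      + (exp (- (4 * b) * (T - d)) - 1) / - (4 * b))) {0..T - d}"
    unfolding h_def using assms
    by (intro has_integral_mult_right has_integral_add has_integral_diff has_integral_exp_mult) auto
  moreover have "(\<integral>z\<in>{0..T - d}. h z \<partial>lborel) = integral {0..T - d} h"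
    unfolding h_def by (intro set_integral_Icc_eq_integral continuous_intros)
  ultimately have "(\<integral>z. indicator (coincidence_window T \<tau>) (z, z + d) * (rho a b z (z + d))\<^sup>2 \<partial>lborel)
      = C * (exp (- (2 * b) * d) * ((exp (- (2 * a) * (T - d)) - 1) / - (2 * a)
        - 2 * ((exp (- (a + 2 * b) * (T - d)) - 1) / - (a + 2 * b))
        + (exp (- (4 * b) * (T - d)) - 1) / - (4 * b)))"
    unfolding integrand set_lebesgue_integral_def by (simp add: integral_unique mult.assoc)
  also have "X * ((E1 - 1) / - (2 * a) - 2 * ((E2 - 1) / - (a + 2 * b)) + (E3 - 1) / - (4 * b))
      = (1 / (2 * a) - 2 / (a + 2 * b) + 1 / (4 * b)) * X
        - X * E1 / (2 * a) + 2 * (X * E2) / (a + 2 * b) - X * E3 / (4 * b)" for X E1 E2 E3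
    using assms by (simp add: divide_simps) (simp add: algebra_simps)
  finally have raw: "(\<integral>z. indicator (coincidence_window T \<tau>) (z, z + d) * (rho a b z (z + d))\<^sup>2 \<partial>lborel)
      = C * ((1 / (2 * a) - 2 / (a + 2 * b) + 1 / (4 * b)) * exp (- (2 * b) * d)
        - exp (- (2 * b) * d) * exp (- (2 * a) * (T - d)) / (2 * a)
        + 2 * (exp (- (2 * b) * d) * exp (- (a + 2 * b) * (T - d))) / (a + 2 * b)
        - exp (- (2 * b) * d) * exp (- (4 * b) * (T - d)) / (4 * b))" .
  have exps:
    "exp (- (2 * b) * d) * exp (- (2 * a) * (T - d)) = exp (- 2 * a * T) * exp (2 * (a - b) * d)"
    "exp (- (2 * b) * d) * exp (- (a + 2 * b) * (T - d)) = exp (- (a + 2 * b) * T) * exp (a * d)"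
    "exp (- (2 * b) * d) * exp (- (4 * b) * (T - d)) = exp (- 4 * b * T) * exp (2 * b * d)"
    by (simp_all add: algebra_simps flip: exp_add)
  show ?thesis
    unfolding raw exps C_def by (simp add: algebra_simps)
qed

lemma coherent_coincidence_coefficients:
  fixes a b :: real
  assumes "a > 0" "b > 0" "a \<noteq> 2 * b" "a \<noteq> b"
  shows "2 * (2 * a * b / (2 * b - a))\<^sup>2 * (1 / (2 * a) - 2 / (a + 2 * b) + 1 / (4 * b)) / (2 * b)
      = a / (a + 2 * b)"
    and "2 * (2 * a * b / (2 * b - a))\<^sup>2 / (2 * a) / (2 * (a - b))
      = 2 * a * b\<^sup>2 / ((a - 2 * b)\<^sup>2 * (a - b))"
    and "2 * (2 * a * b / (2 * b - a))\<^sup>2 / (4 * b) / (2 * b) = a\<^sup>2 / (a - 2 * b)\<^sup>2"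
    and "2 * (2 * a * b / (2 * b - a))\<^sup>2 * 2 / (a + 2 * b) / a
      = 16 * a * b\<^sup>2 / ((a - 2 * b)\<^sup>2 * (a + 2 * b))"
proof -
  have "(2 * b - a)\<^sup>2 = (a - 2 * b)\<^sup>2"
    by algebra
  moreover have "a - 2 * b \<noteq> 0" "a - b \<noteq> 0" "a + 2 * b \<noteq> 0"
    using assms by auto
  ultimately show "2 * (2 * a * b / (2 * b - a))\<^sup>2 * (1 / (2 * a) - 2 / (a + 2 * b) + 1 / (4 * b)) / (2 * b)
      = a / (a + 2 * b)"
    and "2 * (2 * a * b / (2 * b - a))\<^sup>2 / (2 * a) / (2 * (a - b))
      = 2 * a * b\<^sup>2 / ((a - 2 * b)\<^sup>2 * (a - b))"
    and "2 * (2 * a * b / (2 * b - a))\<^sup>2 / (4 * b) / (2 * b) = a\<^sup>2 / (a - 2 * b)\<^sup>2"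
    and "2 * (2 * a * b / (2 * b - a))\<^sup>2 * 2 / (a + 2 * b) / a
      = 16 * a * b\<^sup>2 / ((a - 2 * b)\<^sup>2 * (a + 2 * b))"
    using assms by (simp_all add: divide_simps) (simp_all add: power2_eq_square algebra_simps)
qed

lemma coherent_coincidence_eq:
  assumes "a > 0" "b > 0" "a \<noteq> 2 * b" "a \<noteq> b" "0 < \<tau>" "\<tau> \<le> T"
  shows "coherent_coincidence a b T \<tau> =
    a / (a + 2 * b) * (1 - exp (- 2 * b * \<tau>))
    + 2 * a * b\<^sup>2 / ((a - 2 * b)\<^sup>2 * (a - b)) * (1 - exp (2 * (a - b) * \<tau>)) * exp (- 2 * a * T)
    + a\<^sup>2 / (a - 2 * b)\<^sup>2 * (1 - exp (2 * b * \<tau>)) * exp (- 4 * b * T)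
    - 16 * a * b\<^sup>2 / ((a - 2 * b)\<^sup>2 * (a + 2 * b)) * (1 - exp (a * \<tau>)) * exp (- (a + 2 * b) * T)"
proof -
  define C where "C = (2 * a * b / (2 * b - a))\<^sup>2"
  define K where "K = 1 / (2 * a) - 2 / (a + 2 * b) + 1 / (4 * b)"
  define Y1 where "Y1 = exp (- 2 * a * T)"
  define Y2 where "Y2 = exp (- (a + 2 * b) * T)"
  define Y3 where "Y3 = exp (- 4 * b * T)"
  define \<phi> where "\<phi> d = C * (K * exp (- (2 * b) * d) - Y1 / (2 * a) * exp (2 * (a - b) * d)
      + 2 * Y2 / (a + 2 * b) * exp (a * d) - Y3 / (4 * b) * exp (2 * b * d))" for d
  have lag: "indicator {0..} d *
      (\<integral>z. indicator (coincidence_window T \<tau>) (z, z + d) * (rho a b z (z + d))\<^sup>2 \<partial>lborel)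
      = indicator {0..\<tau>} d * \<phi> d" for d
  proof (cases "0 \<le> d \<and> d \<le> \<tau>")
    case True
    with assms show ?thesis
      by (simp add: integral_rho_sq_lag \<phi>_def C_def K_def Y1_def Y2_def Y3_def)
  next
    case False
    then have "indicator (coincidence_window T \<tau>) (z, z + d) = (0 :: real)" if "0 \<le> d" for z
      using that by (auto simp: coincidence_window_def)
    with False show ?thesis
      by (cases "0 \<le> d") auto
  qed
  have "(\<phi> has_integral C * (K * ((exp (- (2 * b) * \<tau>) - 1) / - (2 * b))
      - Y1 / (2 * a) * ((exp (2 * (a - b) * \<tau>) - 1) / (2 * (a - b)))
      + 2 * Y2 / (a + 2 * b) * ((exp (a * \<tau>) - 1) / a)
      - Y3 / (4 * b) * ((exp (2 * b * \<tau>) - 1) / (2 * b)))) {0..\<tau>}"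
    unfolding \<phi>_def using assms
    by (intro has_integral_mult_right has_integral_add has_integral_diff has_integral_exp_mult) auto
  moreover have "(\<integral>d\<in>{0..\<tau>}. \<phi> d \<partial>lborel) = integral {0..\<tau>} \<phi>"
    unfolding \<phi>_def by (intro set_integral_Icc_eq_integral continuous_intros)
  ultimately have "coherent_coincidence a b T \<tau> = 2 * (C * (K * ((exp (- (2 * b) * \<tau>) - 1) / - (2 * b))
      - Y1 / (2 * a) * ((exp (2 * (a - b) * \<tau>) - 1) / (2 * (a - b)))
      + 2 * Y2 / (a + 2 * b) * ((exp (a * \<tau>) - 1) / a)
      - Y3 / (4 * b) * ((exp (2 * b * \<tau>) - 1) / (2 * b))))"
    unfolding coherent_coincidence_eq_integral_lag lag set_lebesgue_integral_def
    by (simp add: integral_unique)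
  also have "\<dots> = 2 * C * K / (2 * b) * (1 - exp (- 2 * b * \<tau>))
      + 2 * C / (2 * a) / (2 * (a - b)) * (1 - exp (2 * (a - b) * \<tau>)) * Y1
      + 2 * C / (4 * b) / (2 * b) * (1 - exp (2 * b * \<tau>)) * Y3
      - 2 * C * 2 / (a + 2 * b) / a * (1 - exp (a * \<tau>)) * Y2"
    using assms by (simp add: divide_simps) (simp add: algebra_simps)
  finally show ?thesis
    unfolding C_def K_def Y1_def Y2_def Y3_def coherent_coincidence_coefficients[OF assms(1-4)] .
qed

theorem theorem9:
  fixes a b \<eta> T \<tau> :: real
  assumes "a > 0" "b > 0" "a \<noteq> 2 * b" "a \<noteq> b"
    and "0 < \<eta>" "\<eta> \<le> 1" "T > 0" "0 < \<tau>" "\<tau> \<le> T"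
  shows "visibility \<eta> a b T \<tau> * (p_det \<eta> a b T / \<eta>)\<^sup>2 * p_phph \<eta> a b T \<tau> =
    a / (a + 2 * b) * (1 - exp (- 2 * b * \<tau>))
    + 2 * a * b\<^sup>2 / ((a - 2 * b)\<^sup>2 * (a - b)) * (1 - exp (2 * (a - b) * \<tau>)) * exp (- 2 * a * T)
    + a\<^sup>2 / (a - 2 * b)\<^sup>2 * (1 - exp (2 * b * \<tau>)) * exp (- 4 * b * T)
    - 16 * a * b\<^sup>2 / ((a - 2 * b)\<^sup>2 * (a + 2 * b)) * (1 - exp (a * \<tau>)) * exp (- (a + 2 * b) * T)"
proof -
  \<comment> \<open>The hypothesis \<open>\<eta> \<le> 1\<close> is physically natural but not needed.\<close>
  define Q where "Q = incoherent_coincidence a b T \<tau>"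
  define \<Gamma> where "\<Gamma> = coherent_coincidence a b T \<tau>"
  have "Q > 0"
    unfolding Q_def using assms by (intro incoherent_coincidence_pos)
  have "p_det \<eta> a b T > 0"
    using assms by (intro p_det_pos)
  then have phph: "(p_det \<eta> a b T)\<^sup>2 * p_phph \<eta> a b T \<tau> = \<eta>\<^sup>2 * Q"
    unfolding Q_def using assms by (intro p_det_sq_mult_p_phph) auto
  have P_diff: "P_diff \<eta> a b T \<tau> = \<eta>\<^sup>2 * Q / 2"
    unfolding P_diff_def using phph by simp
  have P_same: "P_same \<eta> a b T \<tau> = \<eta>\<^sup>2 / 2 * (Q - \<Gamma>)"
    unfolding Q_def \<Gamma>_def using assms by (intro P_same_eq) auto
  have "visibility \<eta> a b T \<tau> = \<Gamma> / Q"
    unfolding visibility_def P_diff P_same using \<open>Q > 0\<close> assms by (simp add: field_simps)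
  moreover have "(p_det \<eta> a b T / \<eta>)\<^sup>2 * p_phph \<eta> a b T \<tau> = Q"
    using phph assms by (simp add: power_divide field_simps)
  ultimately have "visibility \<eta> a b T \<tau> * (p_det \<eta> a b T / \<eta>)\<^sup>2 * p_phph \<eta> a b T \<tau> = \<Gamma>"
    using \<open>Q > 0\<close> by (simp add: mult.assoc)
  then show ?thesis
    unfolding \<Gamma>_def using coherent_coincidence_eq assms by simp
qed

end
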